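(* Let $\mathcal{H}$ be a real Hilbert space, let $\Gamma\subseteq\mathbb{R}_{++}$ be nonempty, let $\alpha\in(0,1)$ and let $(T_\gamma)_{\gamma\in\Gamma}$ be a family of $\alpha$-averaged nonexpansive operators $\mathcal{H}\to\mathcal{H}$ with $\operatorname{Fix}T_\gamma\neq\emptyset$ for all $\gamma\in\Gamma$. Let $(\mathcal{Q}_{\delta\leftarrow\gamma})_{\gamma,\delta\in\Gamma}$ be fixed-point relocators for $(T_\gamma)_{\gamma\in\Gamma}$ with Lipschitz constants $(\mathcal{L}_{\delta\leftarrow\gamma})_{\gamma,\delta\in\Gamma}$ in $[1,+\infty)$. Suppose that: (1) for each bounded subset $S\subseteq\bigcup_{\gamma\in\Gamma}(\operatorname{Fix}T_\gamma\times\{\gamma\})$ there exists $L>0$ with $\|\mathcal{Q}_{\delta\leftarrow\gamma}x-\mathcal{Q}_{\gamma\leftarrow\gamma}x\|\le L|\delta-\gamma|$ for all $\delta\in\Gamma$ and all $(x,\gamma)\in S$; (2) the map $\mathcal{H}\times\Gamma\to\mathcal{H}$, $(x,\gamma)\mapsto T_\gamma x$, is continuous; (3) $(T_\gamma)_{\gamma\in\Gamma}$ is uniformly boundedly linearly regular; (4) $(\gamma_n)_{n\in\mathbb{N}}\subseteq\Gamma$ converges $R$-linearly to some $\gamma^*\in\Gamma$, and $\sum_{n\in\mathbb{N}}(\mathcal{L}_{\gamma_{n+1}\leftarrow\gamma_n}-1)<+\infty$. Given $x_0\in\mathcal{H}$, define $x_{n+1}:=\mathcal{Q}_{\gamma_{n+1}\leftarrow\gamma_n}T_{\gamma_n}x_n$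 for all $n\in\mathbb{N}$. Then: (i) $(\operatorname{dist}(x_n,\operatorname{Fix}T_{\gamma_n}))_{n\in\mathbb{N}}$ converges $R$-linearly to zero; (ii) $(x_n)_{n\in\mathbb{N}}$ and $(T_{\gamma_n}x_n)_{n\in\mathbb{N}}$ converge $R$-linearly to the same point in $\operatorname{Fix}T_{\gamma^*}$.
   Context: An operator $T:\mathcal{H}\to\mathcal{H}$ is $\alpha$-averaged nonexpansive ($\alpha\in(0,1)$) if $\|Tx-Ty\|^2+\frac{1-\alpha}{\alpha}\|(x-Tx)-(y-Ty)\|^2\le\|x-y\|^2$ for all $x,y$. $\operatorname{Fix}T=\{x: Tx=x\}$, and $\operatorname{dist}(x,C)=\inf_{y\in C}\|x-y\|$. Fixed-point relocators: given a nonempty $\Gamma\subseteq\mathbb{R}_{++}$ and operators $(T_\gamma)_{\gamma\in\Gamma}$ on $\mathcal{H}$, a family of operators $(\mathcal{Q}_{\delta\leftarrow\gamma})_{\delta,\gamma\in\Gamma}$ on $\mathcal{H}$ is called fixed-point relocators for $(T_\gamma)$ with Lipschitz constants $(\mathcal{L}_{\delta\leftarrow\gamma})$ in $[1,\infty)$ if: (a) for all $\gamma,\delta\in\Gamma$, the restriction of $\mathcal{Q}_{\delta\leftarrow\gamma}$ to $\operatorname{Fix}T_\gamma$ is a bijection from $\operatorname{Fix}T_\gamma$ onto $\operatorname{Fix}T_\delta$; (b) for all $\gamma\in\Gamma$ and $x\in\operatorname{Fix}T_\gamma$, the map $\Gamma\to\mathcal{H}$, $\delta\mapsto\mathcal{Q}_{\delta\leftarrow\gamma}x$,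 is continuous; (c) for all $\gamma,\delta,\epsilon\in\Gamma$ and $x\in\operatorname{Fix}T_\gamma$, $\mathcal{Q}_{\epsilon\leftarrow\delta}\mathcal{Q}_{\delta\leftarrow\gamma}x=\mathcal{Q}_{\epsilon\leftarrow\gamma}x$; (d) each $\mathcal{Q}_{\delta\leftarrow\gamma}$ is $\mathcal{L}_{\delta\leftarrow\gamma}$-Lipschitz continuous. Uniform bounded linear regularity: $(T_\gamma)_{\gamma\in\Gamma}$ is uniformly boundedly linearly regular if for every nonempty bounded $S\subseteq\mathcal{H}$ there is $\kappa>0$ with $\operatorname{dist}(x,\operatorname{Fix}T_\gamma)\le\kappa\|x-T_\gamma x\|$ for all $x\in S$ and all $\gamma\in\Gamma$. A sequence $(a_n)$ converges $R$-linearly to $a$ if there exist $C\ge 0$ and $r\in(0,1)$ with $\|a_n-a\|\le Cr^n$ for all $n$. *)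

theory Defs
  imports "HOL-Analysis.Analysis"
begin

definition Fix :: "('a \<Rightarrow> 'a) \<Rightarrow> 'a set" where
  "Fix T = {x. T x = x}"

definition averaged_nonexp :: "real \<Rightarrow> ('a::real_inner \<Rightarrow> 'a) \<Rightarrow> bool" where
  "averaged_nonexp \<alpha> T \<longleftrightarrow>
     (\<forall>x y. (norm (T x - T y))\<^sup>2 + ((1 - \<alpha>) / \<alpha>) * (norm ((x - T x) - (y - T y)))\<^sup>2
            \<le> (norm (x - y))\<^sup>2)"

text \<open>Q d g stands for the relocator from gamma = g to delta = d; Lc d g is its Lipschitz constant.\<close>
definition fixed_point_relocators ::
  "real set \<Rightarrow> (real \<Rightarrow> 'a::real_normed_vector \<Rightarrow> 'a) \<Rightarrow> (real \<Rightarrow> real \<Rightarrow> 'a \<Rightarrow> 'a)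
   \<Rightarrow> (real \<Rightarrow> real \<Rightarrow> real) \<Rightarrow> bool" where
  "fixed_point_relocators \<Gamma> T Q Lc \<longleftrightarrow>
     (\<forall>g\<in>\<Gamma>. \<forall>d\<in>\<Gamma>. bij_betw (Q d g) (Fix (T g)) (Fix (T d))) \<and>
     (\<forall>g\<in>\<Gamma>. \<forall>x\<in>Fix (T g). continuous_on \<Gamma> (\<lambda>d. Q d g x)) \<and>
     (\<forall>g\<in>\<Gamma>. \<forall>d\<in>\<Gamma>. \<forall>e\<in>\<Gamma>. \<forall>x\<in>Fix (T g). Q e d (Q d g x) = Q e g x) \<and>
     (\<forall>g\<in>\<Gamma>. \<forall>d\<in>\<Gamma>. 1 \<le> Lc d g \<and> (Lc d g)-lipschitz_on UNIV (Q d g))"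

definition unif_bdd_lin_regular :: "real set \<Rightarrow> (real \<Rightarrow> 'a::real_normed_vector \<Rightarrow> 'a) \<Rightarrow> bool" where
  "unif_bdd_lin_regular \<Gamma> T \<longleftrightarrow>
     (\<forall>S. S \<noteq> {} \<and> bounded S \<longrightarrow>
        (\<exists>\<kappa>>0. \<forall>x\<in>S. \<forall>g\<in>\<Gamma>. infdist x (Fix (T g)) \<le> \<kappa> * norm (x - T g x)))"

definition R_linear_conv :: "(nat \<Rightarrow> 'a::real_normed_vector) \<Rightarrow> 'a \<Rightarrow> bool" where
  "R_linear_conv a l \<longleftrightarrow> (\<exists>C\<ge>0. \<exists>r. 0 < r \<and> r < 1 \<and> (\<forall>n. norm (a n - l) \<le> C * r ^ n))"

end

theory Submission
  imports Defs
begin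

text \<open>Let d n be the distance of x n to Fix (T (\<gamma> n)). For an \<alpha>-averaged operator,
  dist(T u, Fix T)^2 + ((1 - \<alpha>)/\<alpha>) |u - T u|^2 \<le> dist(u, Fix T)^2, and bounded linear
  regularity on the (bounded) orbit turns this into a contraction dist(T u, Fix T) \<le> \<theta> dist(u, Fix T)
  with \<theta> < 1. A relocator enlarges distances to the fixed-point set by at most its Lipschitz
  constant, and the products of these constants stay below exp (\<Sum>(L - 1)). Hence d n = O(\<theta>^n),
  and so is the residual |x n - T (\<gamma> n) (x n)|. Comparing x n with a nearby fixed point w n, the
  step |x (n+1) - x n| is a multiple of |x n - w n| plus the displacement of w n under relocation,
  which is O(|\<gamma> (n+1) - \<gamma> n|). Geometrically decaying steps give an R-linear limit p, and
  continuity of (u, g) \<mapsto> T g u puts p into Fix (T \<gamma>s).\<close>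

lemma R_linear_conv_iff_norm:
  "R_linear_conv a l \<longleftrightarrow> R_linear_conv (\<lambda>n. norm (a n - l)) 0"
  by (simp add: R_linear_conv_def)

lemma R_linear_conv_bound:
  fixes b :: "nat \<Rightarrow> real"
  assumes "R_linear_conv b 0" and "\<And>n. norm (a n - l) \<le> b n"
  shows "R_linear_conv a l"
proof -
  obtain C r where C: "0 \<le> C" "0 < r" "r < 1" "\<And>n. \<bar>b n\<bar> \<le> C * r ^ n"
    using assms(1) by (auto simp: R_linear_conv_def)
  have "norm (a n - l) \<le> C * r ^ n" for n
    using assms(2)[of n] C(4)[of n] by linarith
  with C show ?thesis
    unfolding R_linear_conv_def by blast
qed

lemma R_linear_conv_add:
  assumes "R_linear_conv a l" and "R_linear_conv b m"
  shows "R_linear_conv (\<lambda>n. a n + b n) (l + m)"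
proof -
  obtain C r where C: "0 \<le> C" "0 < r" "r < 1" "\<And>n. norm (a n - l) \<le> C * r ^ n"
    using assms(1) by (auto simp: R_linear_conv_def)
  obtain D s where D: "0 \<le> D" "0 < s" "s < 1" "\<And>n. norm (b n - m) \<le> D * s ^ n"
    using assms(2) by (auto simp: R_linear_conv_def)
  have "norm (a n + b n - (l + m)) \<le> (C + D) * max r s ^ n" for n
  proof -
    have "norm (a n + b n - (l + m)) \<le> norm (a n - l) + norm (b n - m)"
      by (metis add_diff_add norm_triangle_ineq)
    also have "\<dots> \<le> C * r ^ n + D * s ^ n"
      using C(4) D(4) by (rule add_mono)
    also have "\<dots> \<le> C * max r s ^ n + D * max r s ^ n"
      using C D by (intro add_mono mult_left_mono power_mono) auto
    finally show ?thesis by (simp add: distrib_right)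
  qed
  with C D show ?thesis
    unfolding R_linear_conv_def by (intro exI[of _ "C + D"] conjI exI[of _ "max r s"]) auto
qed

lemma R_linear_conv_mult:
  fixes a :: "nat \<Rightarrow> real"
  assumes "R_linear_conv a l"
  shows "R_linear_conv (\<lambda>n. c * a n) (c * l)"
proof -
  obtain C r where C: "0 \<le> C" "0 < r" "r < 1" "\<And>n. \<bar>a n - l\<bar> \<le> C * r ^ n"
    using assms by (auto simp: R_linear_conv_def)
  have "\<bar>c * a n - c * l\<bar> \<le> (\<bar>c\<bar> * C) * r ^ n" for n
  proof -
    have "\<bar>c * a n - c * l\<bar> = \<bar>c\<bar> * \<bar>a n - l\<bar>"
      by (metis abs_mult right_diff_distrib)
    then show ?thesis
      using mult_left_mono[OF C(4)[of n] abs_ge_zero[of c]] by (simp add: mult.assoc)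
  qed
  with C show ?thesis
    unfolding R_linear_conv_def by (intro exI[of _ "\<bar>c\<bar> * C"] conjI exI[of _ r]) auto
qed

lemma R_linear_conv_Suc:
  assumes "R_linear_conv a l"
  shows "R_linear_conv (\<lambda>n. a (Suc n)) l"
proof -
  obtain C r where C: "0 \<le> C" "0 < r" "r < 1" "\<And>n. norm (a n - l) \<le> C * r ^ n"
    using assms by (auto simp: R_linear_conv_def)
  have "norm (a (Suc n) - l) \<le> C * r ^ n" for n
    using C(4)[of "Suc n"] mult_left_mono[OF power_decreasing[of n "Suc n" r] C(1)] C(2,3)
    by simp
  with C show ?thesis
    unfolding R_linear_conv_def by blast
qed

lemma R_linear_conv_power:
  fixes r :: real
  assumes "0 < r" and "r < 1"
  shows "R_linear_conv (\<lambda>n. r ^ n) 0"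
  using assms unfolding R_linear_conv_def by (intro exI[of _ 1] conjI exI[of _ r]) auto

lemma R_linear_conv_tendsto:
  assumes "R_linear_conv a l"
  shows "a \<longlonglongrightarrow> l"
proof -
  obtain C r where C: "0 \<le> C" "0 < r" "r < 1" "\<And>n. norm (a n - l) \<le> C * r ^ n"
    using assms by (auto simp: R_linear_conv_def)
  have lim: "(\<lambda>n. C * r ^ n) \<longlonglongrightarrow> 0"
    using C by (intro tendsto_mult_right_zero LIMSEQ_power_zero) auto
  have "(\<lambda>n. a n - l) \<longlonglongrightarrow> 0"
    by (rule Lim_null_comparison[OF always_eventually lim]) (use C(4) in blast)
  then show ?thesis by (simp add: LIM_zero_iff)
qed

lemma R_linear_conv_diff:
  assumes "R_linear_conv a l" and "R_linear_conv b m"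
  shows "R_linear_conv (\<lambda>n. a n - b n) (l - m)"
proof (rule R_linear_conv_bound)
  show "R_linear_conv (\<lambda>n. norm (a n - l) + norm (b n - m)) 0"
    using R_linear_conv_add[OF assms[THEN R_linear_conv_iff_norm[THEN iffD1]]] by simp
  fix n
  have "a n - b n - (l - m) = (a n - l) - (b n - m)"
    by (simp add: algebra_simps)
  then show "norm (a n - b n - (l - m)) \<le> norm (a n - l) + norm (b n - m)"
    by (metis norm_triangle_ineq4)
qed

lemma R_linear_conv_successive_diff:
  assumes "R_linear_conv a l"
  shows "R_linear_conv (\<lambda>n. a (Suc n) - a n) 0"
  using R_linear_conv_diff[OF R_linear_conv_Suc[OF assms] assms] by simp

lemma geometric_steps_tail_le:
  fixes a :: "nat \<Rightarrow> 'a::real_normed_vector"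
  assumes steps: "\<And>n. norm (a (Suc n) - a n) \<le> C * r ^ n" and "0 \<le> C" "0 < r" "r < 1"
  shows "norm (a (n + j) - a n) \<le> C / (1 - r) * r ^ n"
proof -
  have "norm (a (n + j) - a n) = norm (\<Sum>k<j. a (Suc (n + k)) - a (n + k))"
    using sum_lessThan_telescope[of "\<lambda>k. a (n + k)" j] by simp
  also have "\<dots> \<le> (\<Sum>k<j. norm (a (Suc (n + k)) - a (n + k)))"
    by (rule norm_sum)
  also have "\<dots> \<le> (\<Sum>k<j. C * r ^ (n + k))"
    by (intro sum_mono steps)
  also have "\<dots> = C * r ^ n * (\<Sum>k<j. r ^ k)"
    by (simp add: power_add sum_distrib_left mult.assoc)
  also have "\<dots> \<le> C * r ^ n * (1 / (1 - r))"
    using sum_le_suminf[OF summable_geometric[of r], of "{..<j}"] suminf_geometric[of r] assms(2-4)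
    by (intro mult_left_mono) auto
  finally show ?thesis by simp
qed

lemma R_linear_conv_if_successive_diff:
  fixes a :: "nat \<Rightarrow> 'a::{real_normed_vector,complete_space}"
  assumes "R_linear_conv (\<lambda>n. a (Suc n) - a n) 0"
  shows "\<exists>l. R_linear_conv a l"
proof -
  obtain C r where C: "0 \<le> C" "0 < r" "r < 1" "\<And>n. norm (a (Suc n) - a n) \<le> C * r ^ n"
    using assms by (auto simp: R_linear_conv_def)
  note tail = geometric_steps_tail_le[OF C(4) C(1-3)]
  have lim: "(\<lambda>n. C / (1 - r) * r ^ n) \<longlonglongrightarrow> 0"
    using C by (intro tendsto_mult_right_zero LIMSEQ_power_zero) auto
  have "Cauchy a"
  proof (rule CauchyI')
    fix e :: real
    assume "0 < e"
    then obtain M where M: "\<And>m. m \<ge> M \<Longrightarrow> C / (1 - r) * r ^ m < e"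
      using order_tendstoD(2)[OF lim] by (auto simp: eventually_sequentially)
    have "dist (a m) (a n) < e" if "m \<ge> M" "n > m" for m n
      using tail[of m "n - m"] M[OF that(1)] that(2) by (simp add: dist_norm norm_minus_commute)
    then show "\<exists>M. \<forall>m\<ge>M. \<forall>n>m. dist (a m) (a n) < e"
      by blast
  qed
  then obtain l where l: "a \<longlonglongrightarrow> l"
    using Cauchy_convergent_iff convergent_def by blast
  have "norm (a n - l) \<le> C / (1 - r) * r ^ n" for n
  proof -
    have lim_n: "(\<lambda>m. norm (a m - a n)) \<longlonglongrightarrow> norm (l - a n)"
      by (intro tendsto_norm tendsto_diff l tendsto_const)
    have "norm (a m - a n) \<le> C / (1 - r) * r ^ n" if "m \<ge> n" for m
      using tail[of n "m - n"] that by simp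
    then have "norm (l - a n) \<le> C / (1 - r) * r ^ n"
      using LIMSEQ_le_const2[OF lim_n] by blast
    then show ?thesis
      by (simp add: norm_minus_commute)
  qed
  with C show ?thesis
    unfolding R_linear_conv_def by (intro exI[of _ l] exI[of _ "C / (1 - r)"] conjI exI[of _ r]) auto
qed

lemma infdist_ge:
  assumes "A \<noteq> {}" and "\<And>a. a \<in> A \<Longrightarrow> c \<le> dist x a"
  shows "c \<le> infdist x A"
  unfolding infdist_notempty[OF assms(1)] by (rule cINF_greatest) (use assms in auto)

lemma R_linear_conv_near_points:
  assumes "\<And>n. A n \<noteq> {}" and "R_linear_conv (\<lambda>n. infdist (x n) (A n)) 0"
  shows "\<exists>w. (\<forall>n. w n \<in> A n) \<and> R_linear_conv (\<lambda>n. x n - w n) 0"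
proof -
  have "\<exists>v\<in>A n. dist (x n) v < infdist (x n) (A n) + (1 / 2) ^ n" for n
  proof -
    have bdd: "bdd_below ((\<lambda>v. dist (x n) v) ` A n)"
      by (rule bdd_belowI2[of _ 0]) simp
    have "(INF v\<in>A n. dist (x n) v) < infdist (x n) (A n) + (1 / 2) ^ n"
      using assms(1)[of n] by (simp add: infdist_notempty)
    then show ?thesis
      using cINF_less_iff[OF assms(1) bdd] by blast
  qed
  then obtain w where w: "\<And>n. w n \<in> A n" "\<And>n. dist (x n) (w n) < infdist (x n) (A n) + (1 / 2) ^ n"
    by metis
  have "R_linear_conv (\<lambda>n. infdist (x n) (A n) + (1 / 2) ^ n) 0"
    using R_linear_conv_add[OF assms(2) R_linear_conv_power[of "1 / 2"]] by simp
  then have "R_linear_conv (\<lambda>n. x n - w n) 0"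
    by (rule R_linear_conv_bound) (use w(2) in \<open>simp add: dist_norm less_imp_le\<close>)
  with w(1) show ?thesis
    by blast
qed

lemma averaged_nonexp_Fix_ineq:
  assumes "averaged_nonexp \<alpha> T" and "z \<in> Fix T"
  shows "(norm (T u - z))\<^sup>2 + (1 - \<alpha>) / \<alpha> * (norm (u - T u))\<^sup>2 \<le> (norm (u - z))\<^sup>2"
proof -
  have "T z = z"
    using assms(2) by (simp add: Fix_def)
  with assms(1) show ?thesis
    unfolding averaged_nonexp_def by (metis diff_self diff_zero)
qed

lemma averaged_nonexp_quasi_nonexpansive:
  assumes "averaged_nonexp \<alpha> T" and "0 < \<alpha>" "\<alpha> \<le> 1" and "z \<in> Fix T"
  shows "norm (T u - z) \<le> norm (u - z)"
proof -
  have "0 \<le> (1 - \<alpha>) / \<alpha> * (norm (u - T u))\<^sup>2"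
    using assms(2,3) by simp
  then have "(norm (T u - z))\<^sup>2 \<le> (norm (u - z))\<^sup>2"
    using averaged_nonexp_Fix_ineq[OF assms(1,4), of u] by linarith
  then show ?thesis
    by (rule power2_le_imp_le) simp
qed

lemma averaged_nonexp_infdist_ineq:
  assumes "averaged_nonexp \<alpha> T" and "Fix T \<noteq> {}"
  shows "(infdist (T u) (Fix T))\<^sup>2 + (1 - \<alpha>) / \<alpha> * (norm (u - T u))\<^sup>2 \<le> (infdist u (Fix T))\<^sup>2"
proof -
  let ?r = "(1 - \<alpha>) / \<alpha> * (norm (u - T u))\<^sup>2"
  have "sqrt ((infdist (T u) (Fix T))\<^sup>2 + ?r) \<le> infdist u (Fix T)"
  proof (rule infdist_ge[OF assms(2)])
    fix z
    assume z: "z \<in> Fix T"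
    have "(infdist (T u) (Fix T))\<^sup>2 \<le> (norm (T u - z))\<^sup>2"
      using infdist_le[OF z, of "T u"] by (simp add: dist_norm infdist_nonneg power_mono)
    then have "(infdist (T u) (Fix T))\<^sup>2 + ?r \<le> (dist u z)\<^sup>2"
      using averaged_nonexp_Fix_ineq[OF assms(1) z, of u] by (simp add: dist_norm)
    then show "sqrt ((infdist (T u) (Fix T))\<^sup>2 + ?r) \<le> dist u z"
      by (rule real_le_lsqrt[OF zero_le_dist])
  qed
  then show ?thesis
    by (rule sqrt_le_D)
qed

lemma averaged_nonexp_infdist_contraction:
  assumes "averaged_nonexp \<alpha> T" and "0 < \<alpha>" "\<alpha> \<le> 1" and "Fix T \<noteq> {}"
    and "0 < \<kappa>" and regular: "infdist u (Fix T) \<le> \<kappa> * norm (u - T u)"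
  shows "infdist (T u) (Fix T) \<le> \<kappa> / sqrt (\<kappa>\<^sup>2 + (1 - \<alpha>) / \<alpha>) * infdist u (Fix T)"
proof -
  define a d r e where "a = infdist (T u) (Fix T)" and "d = infdist u (Fix T)"
    and "r = norm (u - T u)" and "e = (1 - \<alpha>) / \<alpha>"
  have ineq: "a\<^sup>2 + e * r\<^sup>2 \<le> d\<^sup>2"
    using averaged_nonexp_infdist_ineq[OF assms(1,4)] by (simp add: a_def d_def r_def e_def)
  have e: "0 \<le> e" and a: "0 \<le> a" and d: "0 \<le> d"
    using assms(2,3) by (simp_all add: e_def a_def d_def infdist_nonneg)
  have pos: "0 < \<kappa>\<^sup>2 + e"
    using assms(5) e by (simp add: add_pos_nonneg)
  \<comment> \<open>Since a \<le> d \<le> \<kappa> r, we get e a^2 \<le> e \<kappa>^2 r^2 \<le> \<kappa>^2 (d^2 - a^2).\<close>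
  have "a\<^sup>2 \<le> d\<^sup>2"
    using ineq mult_nonneg_nonneg[OF e zero_le_power2[of r]] by linarith
  then have "a \<le> d"
    using d by (rule power2_le_imp_le)
  then have "a \<le> \<kappa> * r"
    using regular unfolding d_def r_def by linarith
  then have "e * a\<^sup>2 \<le> e * (\<kappa> * r)\<^sup>2"
    using a e by (intro mult_left_mono power_mono) auto
  then have "a\<^sup>2 * (\<kappa>\<^sup>2 + e) \<le> \<kappa>\<^sup>2 * d\<^sup>2"
    using mult_left_mono[OF ineq, of "\<kappa>\<^sup>2"] by (simp add: algebra_simps power_mult_distrib)
  also have "\<dots> = (\<kappa> / sqrt (\<kappa>\<^sup>2 + e) * d)\<^sup>2 * (\<kappa>\<^sup>2 + e)"
    using pos by (simp add: power_mult_distrib power_divide)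
  finally have "a\<^sup>2 \<le> (\<kappa> / sqrt (\<kappa>\<^sup>2 + e) * d)\<^sup>2"
    using pos by simp
  then have "a \<le> \<kappa> / sqrt (\<kappa>\<^sup>2 + e) * d"
    by (rule power2_le_imp_le) (use assms(5) d e in simp)
  then show ?thesis
    by (simp add: a_def d_def e_def)
qed

lemma averaged_nonexp_residual_le_infdist:
  assumes "averaged_nonexp \<alpha> T" and "0 < \<alpha>" "\<alpha> < 1" and "Fix T \<noteq> {}"
  shows "norm (u - T u) \<le> sqrt (\<alpha> / (1 - \<alpha>)) * infdist u (Fix T)"
proof -
  have "(1 - \<alpha>) / \<alpha> * (norm (u - T u))\<^sup>2 \<le> (infdist u (Fix T))\<^sup>2"
    using averaged_nonexp_infdist_ineq[OF assms(1,4), of u] zero_le_power2[of "infdist (T u) (Fix T)"]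
    by linarith
  then have "\<alpha> / (1 - \<alpha>) * ((1 - \<alpha>) / \<alpha> * (norm (u - T u))\<^sup>2)
      \<le> \<alpha> / (1 - \<alpha>) * (infdist u (Fix T))\<^sup>2"
    using assms(2,3) by (intro mult_left_mono) auto
  then have "(norm (u - T u))\<^sup>2 \<le> \<alpha> / (1 - \<alpha>) * (infdist u (Fix T))\<^sup>2"
    using assms(2,3) by simp
  also have "\<dots> = (sqrt (\<alpha> / (1 - \<alpha>)) * infdist u (Fix T))\<^sup>2"
    using assms(2,3) by (simp add: power_mult_distrib)
  finally show ?thesis
    by (rule power2_le_imp_le) (use assms(2,3) in \<open>simp add: infdist_nonneg\<close>)
qed

context
  fixes \<Gamma> :: "real set" and T :: "real \<Rightarrow> 'a::real_normed_vector \<Rightarrow> 'a"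
    and Q :: "real \<Rightarrow> real \<Rightarrow> 'a \<Rightarrow> 'a" and Lc :: "real \<Rightarrow> real \<Rightarrow> real"
  assumes reloc: "fixed_point_relocators \<Gamma> T Q Lc"
begin

lemma relocator_Fix:
  assumes "g \<in> \<Gamma>" "d \<in> \<Gamma>" and "w \<in> Fix (T g)"
  shows "Q d g w \<in> Fix (T d)"
  using reloc assms unfolding fixed_point_relocators_def by (meson bij_betwE)

lemma relocator_Lc_ge_1:
  assumes "g \<in> \<Gamma>" "d \<in> \<Gamma>"
  shows "1 \<le> Lc d g"
  using reloc assms unfolding fixed_point_relocators_def by blast

lemma relocator_lipschitz:
  assumes "g \<in> \<Gamma>" "d \<in> \<Gamma>"
  shows "norm (Q d g u - Q d g v) \<le> Lc d g * norm (u - v)"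
proof -
  have "(Lc d g)-lipschitz_on UNIV (Q d g)"
    using reloc assms unfolding fixed_point_relocators_def by blast
  then show ?thesis
    by (auto dest: lipschitz_onD simp: dist_norm)
qed

lemma relocator_trans:
  assumes "g \<in> \<Gamma>" "d \<in> \<Gamma>" "e \<in> \<Gamma>" and "w \<in> Fix (T g)"
  shows "Q e d (Q d g w) = Q e g w"
  using reloc assms unfolding fixed_point_relocators_def by blast

lemma relocator_self:
  assumes "g \<in> \<Gamma>" and "w \<in> Fix (T g)"
  shows "Q g g w = w"
proof -
  have "inj_on (Q g g) (Fix (T g))"
    using reloc assms unfolding fixed_point_relocators_def by (meson bij_betw_imp_inj_on)
  moreover have "Q g g (Q g g w) = Q g g w"
    using relocator_trans[OF assms(1) assms(1) assms(1) assms(2)] .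
  ultimately show ?thesis
    using relocator_Fix[OF assms(1) assms(1) assms(2)] assms(2) by (blast dest: inj_onD)
qed

lemma relocator_infdist_le:
  assumes "g \<in> \<Gamma>" "d \<in> \<Gamma>" and "Fix (T g) \<noteq> {}"
  shows "infdist (Q d g u) (Fix (T d)) \<le> Lc d g * infdist u (Fix (T g))"
proof -
  have L: "0 < Lc d g"
    using relocator_Lc_ge_1[OF assms(1,2)] by linarith
  have "infdist (Q d g u) (Fix (T d)) / Lc d g \<le> infdist u (Fix (T g))"
  proof (rule infdist_ge[OF assms(3)])
    fix w
    assume "w \<in> Fix (T g)"
    then have "infdist (Q d g u) (Fix (T d)) \<le> dist (Q d g u) (Q d g w)"
      using relocator_Fix[OF assms(1,2)] by (simp add: infdist_le)
    also have "\<dots> \<le> Lc d g * dist u w"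
      using relocator_lipschitz[OF assms(1,2)] by (simp add: dist_norm)
    finally show "infdist (Q d g u) (Fix (T d)) / Lc d g \<le> dist u w"
      using L by (simp add: divide_le_eq mult.commute)
  qed
  then show ?thesis
    using L by (simp add: divide_le_eq mult.commute)
qed

end

lemma prod_le_exp_suminf:
  fixes L :: "nat \<Rightarrow> real"
  assumes "\<And>k. 1 \<le> L k" and "summable (\<lambda>k. L k - 1)"
  shows "(\<Prod>k<n. L k) \<le> exp (\<Sum>k. L k - 1)"
proof -
  have "(\<Prod>k<n. L k) \<le> (\<Prod>k<n. exp (L k - 1))"
  proof (rule prod_mono)
    show "0 \<le> L k \<and> L k \<le> exp (L k - 1)" for k
      using assms(1)[of k] exp_ge_add_one_self[of "L k - 1"] by simp
  qed
  also have "\<dots> = exp (\<Sum>k<n. L k - 1)"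
    by (simp add: exp_sum)
  also have "\<dots> \<le> exp (\<Sum>k. L k - 1)"
    using sum_le_suminf[OF assms(2), of "{..<n}"] assms(1) by simp
  finally show ?thesis .
qed

lemma le_prod_mult_initial:
  fixes u c :: "nat \<Rightarrow> real"
  assumes "\<And>n. u (Suc n) \<le> c n * u n" and "\<And>n. 0 \<le> c n"
  shows "u n \<le> (\<Prod>k<n. c k) * u 0"
proof (induction n)
  case (Suc n)
  have "u (Suc n) \<le> c n * ((\<Prod>k<n. c k) * u 0)"
    using assms(1)[of n] mult_left_mono[OF Suc.IH assms(2)[of n]] by linarith
  then show ?case
    by (simp add: mult_ac)
qed simp

lemma limit_in_Fix:
  fixes T :: "'g::topological_space \<Rightarrow> 'a::t2_space \<Rightarrow> 'a"
  assumes cont: "continuous_on (UNIV \<times> \<Gamma>) (\<lambda>(y, g). T g y)"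
    and "\<And>n. \<gamma> n \<in> \<Gamma>" "g \<in> \<Gamma>"
    and "x \<longlonglongrightarrow> p" "\<gamma> \<longlonglongrightarrow> g" "(\<lambda>n. T (\<gamma> n) (x n)) \<longlonglongrightarrow> p"
  shows "p \<in> Fix (T g)"
proof -
  have "(\<lambda>n. (\<lambda>(y, h). T h y) (x n, \<gamma> n)) \<longlonglongrightarrow> (\<lambda>(y, h). T h y) (p, g)"
    by (rule continuous_on_tendsto_compose[OF cont]) (use assms in \<open>auto intro: tendsto_Pair\<close>)
  then have "(\<lambda>n. T (\<gamma> n) (x n)) \<longlonglongrightarrow> T g p"
    by simp
  from this assms(6) have "T g p = p"
    by (rule LIMSEQ_unique)
  then show ?thesis
    by (simp add: Fix_def)
qed

locale relocated_iteration =
  fixes \<Gamma> :: "real set" and \<alpha> :: real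
    and T :: "real \<Rightarrow> 'a::real_inner \<Rightarrow> 'a"
    and Q :: "real \<Rightarrow> real \<Rightarrow> 'a \<Rightarrow> 'a" and Lc :: "real \<Rightarrow> real \<Rightarrow> real"
    and \<gamma> :: "nat \<Rightarrow> real" and x :: "nat \<Rightarrow> 'a"
  assumes \<alpha>: "0 < \<alpha>" "\<alpha> < 1"
    and averaged: "\<And>g. g \<in> \<Gamma> \<Longrightarrow> averaged_nonexp \<alpha> (T g)"
    and Fix_nonempty: "\<And>g. g \<in> \<Gamma> \<Longrightarrow> Fix (T g) \<noteq> {}"
    and reloc: "fixed_point_relocators \<Gamma> T Q Lc"
    and reloc_param_lipschitz: "\<And>S. bounded S \<Longrightarrow> S \<subseteq> (\<Union>g\<in>\<Gamma>. Fix (T g) \<times> {g}) \<Longrightarrow>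
      \<exists>L>0. \<forall>d\<in>\<Gamma>. \<forall>(y, g)\<in>S. norm (Q d g y - Q g g y) \<le> L * \<bar>d - g\<bar>"
    and \<gamma>_in: "\<And>n. \<gamma> n \<in> \<Gamma>"
    and Lc_summable: "summable (\<lambda>n. Lc (\<gamma> (Suc n)) (\<gamma> n) - 1)"
    and iter: "\<And>n. x (Suc n) = Q (\<gamma> (Suc n)) (\<gamma> n) (T (\<gamma> n) (x n))"
begin

abbreviation Lc_bound :: real where
  "Lc_bound \<equiv> exp (\<Sum>k. Lc (\<gamma> (Suc k)) (\<gamma> k) - 1)"

lemma Lc_ge_1: "1 \<le> Lc (\<gamma> (Suc n)) (\<gamma> n)"
  using relocator_Lc_ge_1[OF reloc \<gamma>_in \<gamma>_in] .

lemma Lc_prod_le: "(\<Prod>k<n. Lc (\<gamma> (Suc k)) (\<gamma> k)) \<le> Lc_bound"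
  using Lc_ge_1 Lc_summable by (rule prod_le_exp_suminf)

lemma Lc_le: "Lc (\<gamma> (Suc n)) (\<gamma> n) \<le> Lc_bound"
proof -
  have "1 * Lc (\<gamma> (Suc n)) (\<gamma> n)
      \<le> (\<Prod>k<n. Lc (\<gamma> (Suc k)) (\<gamma> k)) * Lc (\<gamma> (Suc n)) (\<gamma> n)"
    using Lc_ge_1[of n] by (intro mult_right_mono prod_ge_1 Lc_ge_1) auto
  also have "\<dots> \<le> Lc_bound"
    using Lc_prod_le[of "Suc n"] by simp
  finally show ?thesis
    by simp
qed

lemma iterate_dist_le:
  assumes "w \<in> Fix (T (\<gamma> n))"
  shows "norm (x (Suc n) - Q (\<gamma> (Suc n)) (\<gamma> n) w) \<le> Lc (\<gamma> (Suc n)) (\<gamma> n) * norm (x n - w)"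
proof -
  have "norm (x (Suc n) - Q (\<gamma> (Suc n)) (\<gamma> n) w)
      \<le> Lc (\<gamma> (Suc n)) (\<gamma> n) * norm (T (\<gamma> n) (x n) - w)"
    unfolding iter by (rule relocator_lipschitz[OF reloc \<gamma>_in \<gamma>_in])
  also have "\<dots> \<le> Lc (\<gamma> (Suc n)) (\<gamma> n) * norm (x n - w)"
    using Lc_ge_1[of n]
      averaged_nonexp_quasi_nonexpansive[OF averaged[OF \<gamma>_in] \<alpha>(1) less_imp_le[OF \<alpha>(2)] assms]
    by (intro mult_left_mono) auto
  finally show ?thesis .
qed

lemma relocated_Fix_bounded:
  assumes "bounded (range \<gamma>)" and p: "p \<in> Fix (T (\<gamma> 0))"
  shows "bounded (range (\<lambda>n. Q (\<gamma> n) (\<gamma> 0) p))"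
proof -
  have "bounded {(p, \<gamma> 0)}" and "{(p, \<gamma> 0)} \<subseteq> (\<Union>g\<in>\<Gamma>. Fix (T g) \<times> {g})"
    using p \<gamma>_in by auto
  then obtain L where "L > 0"
    and L: "\<forall>d\<in>\<Gamma>. \<forall>(y, g)\<in>{(p, \<gamma> 0)}. norm (Q d g y - Q g g y) \<le> L * \<bar>d - g\<bar>"
    by (blast dest: reloc_param_lipschitz)
  obtain B where B: "\<And>n. \<bar>\<gamma> n\<bar> \<le> B"
    using assms(1) unfolding bounded_iff by auto
  have "norm (Q (\<gamma> n) (\<gamma> 0) p) \<le> norm p + L * (B + B)" for n
  proof -
    have "norm (Q (\<gamma> n) (\<gamma> 0) p - p) \<le> L * \<bar>\<gamma> n - \<gamma> 0\<bar>"
      using L \<gamma>_in[of n] relocator_self[OF reloc \<gamma>_in p] by simp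
    also have "\<dots> \<le> L * (B + B)"
      using \<open>L > 0\<close> B[of n] B[of 0] by (intro mult_left_mono) auto
    finally show ?thesis
      using norm_triangle_sub[of "Q (\<gamma> n) (\<gamma> 0) p" p] by linarith
  qed
  then show ?thesis
    unfolding bounded_iff by (intro exI[of _ "norm p + L * (B + B)"]) auto
qed

text \<open>The iterates stay within bounded distance of the relocated copies of one fixed point.\<close>

lemma iterates_bounded:
  assumes "bounded (range \<gamma>)"
  shows "bounded (range x)"
proof -
  obtain p where p: "p \<in> Fix (T (\<gamma> 0))"
    using Fix_nonempty[OF \<gamma>_in] by blast
  define z where "z n = Q (\<gamma> n) (\<gamma> 0) p" for n
  have z_Fix: "z n \<in> Fix (T (\<gamma> n))" for n
    unfolding z_def using relocator_Fix[OF reloc \<gamma>_in \<gamma>_in p] .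
  have z_Suc: "z (Suc n) = Q (\<gamma> (Suc n)) (\<gamma> n) (z n)" for n
    unfolding z_def using relocator_trans[OF reloc \<gamma>_in \<gamma>_in \<gamma>_in p] by simp
  have z_0: "z 0 = p"
    unfolding z_def using relocator_self[OF reloc \<gamma>_in p] .
  have step: "norm (x (Suc k) - z (Suc k)) \<le> Lc (\<gamma> (Suc k)) (\<gamma> k) * norm (x k - z k)" for k
    unfolding z_Suc by (rule iterate_dist_le[OF z_Fix])
  have "norm (x n - z n) \<le> Lc_bound * norm (x 0 - p)" for n
  proof -
    have "norm (x n - z n) \<le> (\<Prod>k<n. Lc (\<gamma> (Suc k)) (\<gamma> k)) * norm (x 0 - z 0)"
      by (rule le_prod_mult_initial[where u = "\<lambda>n. norm (x n - z n)", OF step])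
        (rule order_trans[OF zero_le_one Lc_ge_1])
    also have "\<dots> \<le> Lc_bound * norm (x 0 - p)"
      unfolding z_0 by (intro mult_right_mono Lc_prod_le norm_ge_zero)
    finally show ?thesis .
  qed
  then have "bounded (range (\<lambda>n. x n - z n))"
    unfolding bounded_iff by (intro exI[of _ "Lc_bound * norm (x 0 - p)"]) auto
  moreover have "bounded (range z)"
    unfolding z_def using assms p by (rule relocated_Fix_bounded)
  ultimately have "bounded (range (\<lambda>n. (x n - z n) + z n))"
    by (rule bounded_plus_comp)
  then show ?thesis
    by simp
qed

lemma dist_Fix_R_linear:
  assumes "0 < \<kappa>" and regular: "\<And>n. infdist (x n) (Fix (T (\<gamma> n))) \<le> \<kappa> * norm (x n - T (\<gamma> n) (x n))"
  shows "R_linear_conv (\<lambda>n. infdist (x n) (Fix (T (\<gamma> n)))) 0"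
proof -
  define d where "d n = infdist (x n) (Fix (T (\<gamma> n)))" for n
  define \<theta> where "\<theta> = \<kappa> / sqrt (\<kappa>\<^sup>2 + (1 - \<alpha>) / \<alpha>)"
  have "\<kappa> < sqrt (\<kappa>\<^sup>2 + (1 - \<alpha>) / \<alpha>)"
    using \<alpha> assms(1) by (intro real_less_rsqrt) simp
  moreover from this have "0 < sqrt (\<kappa>\<^sup>2 + (1 - \<alpha>) / \<alpha>)"
    using assms(1) by linarith
  ultimately have \<theta>: "0 < \<theta>" "\<theta> < 1"
    using assms(1) unfolding \<theta>_def by (auto intro: divide_pos_pos simp: divide_less_eq_1_pos)
  have "d (Suc n) \<le> (Lc (\<gamma> (Suc n)) (\<gamma> n) * \<theta>) * d n" for n
  proof -
    have "d (Suc n) \<le> Lc (\<gamma> (Suc n)) (\<gamma> n) * infdist (T (\<gamma> n) (x n)) (Fix (T (\<gamma> n)))"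
      unfolding d_def iter by (rule relocator_infdist_le[OF reloc \<gamma>_in \<gamma>_in Fix_nonempty[OF \<gamma>_in]])
    also have "\<dots> \<le> Lc (\<gamma> (Suc n)) (\<gamma> n) * (\<theta> * d n)"
      using Lc_ge_1[of n] averaged_nonexp_infdist_contraction[OF averaged[OF \<gamma>_in] \<alpha>(1)
          less_imp_le[OF \<alpha>(2)] Fix_nonempty[OF \<gamma>_in] assms(1) regular]
      by (intro mult_left_mono) (simp_all add: \<theta>_def d_def)
    finally show ?thesis
      by (simp add: mult_ac)
  qed
  note recurrence = this
  have bound: "d n \<le> (Lc_bound * d 0) * \<theta> ^ n" for n
  proof -
    have "d n \<le> (\<Prod>k<n. Lc (\<gamma> (Suc k)) (\<gamma> k) * \<theta>) * d 0"
    proof (rule le_prod_mult_initial[where c = "\<lambda>k. Lc (\<gamma> (Suc k)) (\<gamma> k) * \<theta>", OF recurrence])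
      show "0 \<le> Lc (\<gamma> (Suc k)) (\<gamma> k) * \<theta>" for k
        using Lc_ge_1[of k] \<theta> by simp
    qed
    also have "\<dots> = (\<Prod>k<n. Lc (\<gamma> (Suc k)) (\<gamma> k)) * d 0 * \<theta> ^ n"
      by (simp add: prod.distrib mult_ac)
    also have "\<dots> \<le> Lc_bound * d 0 * \<theta> ^ n"
      using Lc_prod_le[of n] \<theta> infdist_nonneg unfolding d_def
      by (intro mult_right_mono) simp_all
    finally show ?thesis .
  qed
  show ?thesis
  proof (rule R_linear_conv_bound)
    show "R_linear_conv (\<lambda>n. (Lc_bound * d 0) * \<theta> ^ n) 0"
      using R_linear_conv_mult[OF R_linear_conv_power[OF \<theta>]] by simp
    show "norm (infdist (x n) (Fix (T (\<gamma> n))) - 0) \<le> (Lc_bound * d 0) * \<theta> ^ n" for n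
      using bound[of n] by (simp add: d_def infdist_nonneg)
  qed
qed

lemma residual_R_linear:
  assumes "R_linear_conv (\<lambda>n. infdist (x n) (Fix (T (\<gamma> n)))) 0"
  shows "R_linear_conv (\<lambda>n. x n - T (\<gamma> n) (x n)) 0"
proof (rule R_linear_conv_bound)
  show "R_linear_conv (\<lambda>n. sqrt (\<alpha> / (1 - \<alpha>)) * infdist (x n) (Fix (T (\<gamma> n)))) 0"
    using R_linear_conv_mult[OF assms] by simp
  show "norm (x n - T (\<gamma> n) (x n) - 0) \<le> sqrt (\<alpha> / (1 - \<alpha>)) * infdist (x n) (Fix (T (\<gamma> n)))" for n
    using averaged_nonexp_residual_le_infdist[OF averaged[OF \<gamma>_in] \<alpha> Fix_nonempty[OF \<gamma>_in]] by simp
qed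

lemma iterate_step_le:
  assumes w: "w \<in> Fix (T (\<gamma> n))"
  shows "norm (x (Suc n) - x n)
    \<le> (Lc_bound + 1) * norm (x n - w) + norm (Q (\<gamma> (Suc n)) (\<gamma> n) w - w)"
proof -
  let ?Qw = "Q (\<gamma> (Suc n)) (\<gamma> n) w"
  have "x (Suc n) - x n = (x (Suc n) - ?Qw) + (?Qw - w) + (w - x n)"
    by simp
  then have "norm (x (Suc n) - x n) \<le> norm (x (Suc n) - ?Qw) + norm (?Qw - w) + norm (w - x n)"
    by (metis norm_triangle_le norm_triangle_ineq add_right_mono)
  also have "\<dots> \<le> Lc_bound * norm (x n - w) + norm (?Qw - w) + norm (x n - w)"
    using iterate_dist_le[OF w] mult_right_mono[OF Lc_le[of n] norm_ge_zero[of "x n - w"]]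
      norm_minus_commute[of w "x n"]
    by linarith
  finally show ?thesis
    by (simp add: algebra_simps)
qed

lemma relocation_displacement_le:
  assumes w_Fix: "\<And>n. w n \<in> Fix (T (\<gamma> n))" and "bounded (range w)" "bounded (range \<gamma>)"
  obtains L where "\<And>n. norm (Q (\<gamma> (Suc n)) (\<gamma> n) (w n) - w n) \<le> L * \<bar>\<gamma> (Suc n) - \<gamma> n\<bar>"
proof -
  have "bounded (range (\<lambda>n. (w n, \<gamma> n)))"
    using bounded_Times[OF assms(2,3)] by (rule bounded_subset) auto
  moreover have "range (\<lambda>n. (w n, \<gamma> n)) \<subseteq> (\<Union>g\<in>\<Gamma>. Fix (T g) \<times> {g})"
    using w_Fix \<gamma>_in by auto
  ultimately obtain L where L: "\<forall>d\<in>\<Gamma>. \<forall>(y, g)\<in>range (\<lambda>n. (w n, \<gamma> n)).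
      norm (Q d g y - Q g g y) \<le> L * \<bar>d - g\<bar>"
    by (blast dest: reloc_param_lipschitz)
  have "norm (Q (\<gamma> (Suc n)) (\<gamma> n) (w n) - w n) \<le> L * \<bar>\<gamma> (Suc n) - \<gamma> n\<bar>" for n
  proof -
    have "(w n, \<gamma> n) \<in> range (\<lambda>n. (w n, \<gamma> n))"
      by blast
    with L \<gamma>_in have "norm (Q (\<gamma> (Suc n)) (\<gamma> n) (w n) - Q (\<gamma> n) (\<gamma> n) (w n))
        \<le> L * \<bar>\<gamma> (Suc n) - \<gamma> n\<bar>"
      by blast
    then show ?thesis
      by (simp add: relocator_self[OF reloc \<gamma>_in w_Fix])
  qed
  then show ?thesis
    using that by blast
qed

lemma successive_diff_R_linear:
  assumes dist: "R_linear_conv (\<lambda>n. infdist (x n) (Fix (T (\<gamma> n)))) 0"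
    and \<gamma>_conv: "R_linear_conv \<gamma> \<gamma>s"
  shows "R_linear_conv (\<lambda>n. x (Suc n) - x n) 0"
proof -
  obtain w where w_Fix: "\<And>n. w n \<in> Fix (T (\<gamma> n))" and w: "R_linear_conv (\<lambda>n. x n - w n) 0"
    using R_linear_conv_near_points[OF Fix_nonempty[OF \<gamma>_in] dist] by blast
  have bounded_\<gamma>: "bounded (range \<gamma>)"
    using R_linear_conv_tendsto[OF \<gamma>_conv] by (rule convergent_imp_bounded)
  have "bounded (range (\<lambda>n. x n - (x n - w n)))"
    using iterates_bounded[OF bounded_\<gamma>] convergent_imp_bounded[OF R_linear_conv_tendsto[OF w]]
    by (rule bounded_minus_comp)
  then obtain L where displacement:
    "\<And>n. norm (Q (\<gamma> (Suc n)) (\<gamma> n) (w n) - w n) \<le> L * \<bar>\<gamma> (Suc n) - \<gamma> n\<bar>"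
    using relocation_displacement_le[OF w_Fix _ bounded_\<gamma>] by auto
  let ?b = "\<lambda>n. (Lc_bound + 1) * norm (x n - w n) + L * \<bar>\<gamma> (Suc n) - \<gamma> n\<bar>"
  show ?thesis
  proof (rule R_linear_conv_bound)
    show "R_linear_conv ?b 0"
      using R_linear_conv_add[OF R_linear_conv_mult[OF w[THEN R_linear_conv_iff_norm[THEN iffD1]]]
          R_linear_conv_mult[OF R_linear_conv_successive_diff[OF \<gamma>_conv,
            THEN R_linear_conv_iff_norm[THEN iffD1]]]]
      by simp
    show "norm (x (Suc n) - x n - 0) \<le> ?b n" for n
      using iterate_step_le[OF w_Fix, of n] displacement[of n] by simp
  qed
qed

end

theorem theorem3p6:
  fixes \<Gamma> :: "real set" and \<alpha> :: real
    and T :: "real \<Rightarrow> 'a::{real_inner,complete_space} \<Rightarrow> 'a"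
    and Q :: "real \<Rightarrow> real \<Rightarrow> 'a \<Rightarrow> 'a" and Lc :: "real \<Rightarrow> real \<Rightarrow> real"
    and \<gamma> :: "nat \<Rightarrow> real" and \<gamma>s :: real and x :: "nat \<Rightarrow> 'a"
  assumes \<Gamma>_pos: "\<Gamma> \<subseteq> {0<..}" and \<Gamma>_ne: "\<Gamma> \<noteq> {}"
    and \<alpha>: "0 < \<alpha>" "\<alpha> < 1"
    and avg: "\<forall>g\<in>\<Gamma>. averaged_nonexp \<alpha> (T g)"
    and fix_ne: "\<forall>g\<in>\<Gamma>. Fix (T g) \<noteq> {}"
    and reloc: "fixed_point_relocators \<Gamma> T Q Lc"
    and h1: "\<forall>S. bounded S \<and> S \<subseteq> (\<Union>g\<in>\<Gamma>. Fix (T g) \<times> {g}) \<longrightarrow>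
               (\<exists>L>0. \<forall>d\<in>\<Gamma>. \<forall>(y, g)\<in>S. norm (Q d g y - Q g g y) \<le> L * \<bar>d - g\<bar>)"
    and h2: "continuous_on (UNIV \<times> \<Gamma>) (\<lambda>(y, g). T g y)"
    and h3: "unif_bdd_lin_regular \<Gamma> T"
    and h4: "\<forall>n. \<gamma> n \<in> \<Gamma>" "\<gamma>s \<in> \<Gamma>" "R_linear_conv \<gamma> \<gamma>s"
      "summable (\<lambda>n. Lc (\<gamma> (Suc n)) (\<gamma> n) - 1)"
    and iter: "\<forall>n. x (Suc n) = Q (\<gamma> (Suc n)) (\<gamma> n) (T (\<gamma> n) (x n))"
  shows "R_linear_conv (\<lambda>n. infdist (x n) (Fix (T (\<gamma> n)))) 0 \<and>
         (\<exists>p\<in>Fix (T \<gamma>s). R_linear_conv x p \<and> R_linear_conv (\<lambda>n. T (\<gamma> n) (x n)) p)"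
proof -
  interpret relocated_iteration \<Gamma> \<alpha> T Q Lc \<gamma> x
    using \<alpha> avg fix_ne reloc h1 h4(1,4) iter by unfold_locales blast+
  have "bounded (range \<gamma>)"
    using R_linear_conv_tendsto[OF h4(3)] by (rule convergent_imp_bounded)
  then have "bounded (range x)" and "range x \<noteq> {}"
    by (rule iterates_bounded) simp
  then obtain \<kappa> where "\<kappa> > 0"
    and regular: "\<forall>u\<in>range x. \<forall>g\<in>\<Gamma>. infdist u (Fix (T g)) \<le> \<kappa> * norm (u - T g u)"
    using h3 unfolding unif_bdd_lin_regular_def by blast
  have dist: "R_linear_conv (\<lambda>n. infdist (x n) (Fix (T (\<gamma> n)))) 0"
    using \<open>\<kappa> > 0\<close> by (rule dist_Fix_R_linear) (use regular \<gamma>_in in blast)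
  obtain p where x_p: "R_linear_conv x p"
    using R_linear_conv_if_successive_diff[OF successive_diff_R_linear[OF dist h4(3)]] by blast
  have Tx_p: "R_linear_conv (\<lambda>n. T (\<gamma> n) (x n)) p"
    using R_linear_conv_diff[OF x_p residual_R_linear[OF dist]] by simp
  have "p \<in> Fix (T \<gamma>s)"
    by (intro limit_in_Fix[where \<gamma> = \<gamma> and x = x, OF h2 \<gamma>_in h4(2)] R_linear_conv_tendsto x_p h4(3) Tx_p)
  with dist x_p Tx_p show ?thesis
    by blast
qed

end
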